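(* Let $X$ be a set and let $\mathcal{L}\subset\mathcal{P}(X)$ be a nest (for every $M,N\in\mathcal{L}$, either $M\subset N$ or $N\subset M$). 1. If for each $L\in\mathcal{L}$ there exists $\sup L$ with respect to $\trianglelefteq_{\mathcal{L}}$, and $\sup L=k$, then $L\supset X-\uparrow{k}$. 2. If for each $L\in\mathcal{L}$ there exists $\sup L$ with respect to $\trianglelefteq_{\mathcal{L}}$ with $\sup L\in X-L$, and $\sup L=k$, then $L\subset X-\uparrow{k}$.
   Context: For a nest $\mathcal{L}$ on $X$, $x\triangleleft_{\mathcal{L}} y$ iff there exists $L\in\mathcal{L}$ with $x\in L$ and $y\notin L$; $\trianglelefteq_{\mathcal{L}}$ is its reflexive version ($x\trianglelefteq_{\mathcal{L}} y$ iff $x\triangleleft_{\mathcal{L}} y$ or $x=y$). For $k\in X$, $\uparrow{k}$ denotes the up-set of $k$, i.e. the set of $y\in X$ with $k\trianglelefteq_{\mathcal{L}} y$ (as used in the paper's proofs and examples). *)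

theory Defs
  imports Main
begin

definition nest :: "'a set \<Rightarrow> 'a set set \<Rightarrow> bool" where
  "nest X \<L> \<longleftrightarrow> \<L> \<subseteq> Pow X \<and> (\<forall>M\<in>\<L>. \<forall>N\<in>\<L>. M \<subseteq> N \<or> N \<subseteq> M)"

definition nest_lt :: "'a set set \<Rightarrow> 'a \<Rightarrow> 'a \<Rightarrow> bool" where
  "nest_lt \<L> x y \<longleftrightarrow> (\<exists>L\<in>\<L>. x \<in> L \<and> y \<notin> L)"

definition nest_le :: "'a set set \<Rightarrow> 'a \<Rightarrow> 'a \<Rightarrow> bool" where
  "nest_le \<L> x y \<longleftrightarrow> nest_lt \<L> x y \<or> x = y"

definition nest_up :: "'a set \<Rightarrow> 'a set set \<Rightarrow> 'a \<Rightarrow> 'a set" where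
  "nest_up X \<L> k = {y \<in> X. nest_le \<L> k y}"

definition nest_sup :: "'a set \<Rightarrow> 'a set set \<Rightarrow> 'a set \<Rightarrow> 'a \<Rightarrow> bool" where
  "nest_sup X \<L> A s \<longleftrightarrow> s \<in> X \<and> (\<forall>a\<in>A. nest_le \<L> a s)
     \<and> (\<forall>u\<in>X. (\<forall>a\<in>A. nest_le \<L> a u) \<longrightarrow> nest_le \<L> s u)"

end

theory Submission
  imports Defs
begin

text \<open>Every element outside a member L of the nest is an upper bound of L, so it lies above
  sup L; this gives part 1. For part 2, uniqueness of suprema (antisymmetry of the nest
  order) shows sup L \<notin> L, and an element of L lying both below and above sup L would
  equal it.\<close>

lemma nest_le_antisym:
  assumes "nest X \<L>" "nest_le \<L> a b" "nest_le \<L> b a"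
  shows "a = b"
proof (rule ccontr)
  assume "a \<noteq> b"
  then obtain N M where N: "N \<in> \<L>" "a \<in> N" "b \<notin> N" and M: "M \<in> \<L>" "b \<in> M" "a \<notin> M"
    using assms(2,3) unfolding nest_le_def nest_lt_def by blast
  with assms(1) have "N \<subseteq> M \<or> M \<subseteq> N" unfolding nest_def by blast
  with N M show False by blast
qed

lemma nest_sup_unique:
  assumes "nest X \<L>" "nest_sup X \<L> A s" "nest_sup X \<L> A t"
  shows "s = t"
proof (rule nest_le_antisym[OF assms(1)])
  show "nest_le \<L> s t" using assms(2,3) unfolding nest_sup_def by blast
  show "nest_le \<L> t s" using assms(2,3) unfolding nest_sup_def by blast
qed

lemma nest_le_if_notin_member:
  assumes "L \<in> \<L>" "a \<in> L" "x \<notin> L"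
  shows "nest_le \<L> a x"
  using assms unfolding nest_le_def nest_lt_def by blast

lemma compl_nest_up_sup_subset:
  assumes "L \<in> \<L>" "nest_sup X \<L> L k"
  shows "X - nest_up X \<L> k \<subseteq> L"
proof
  fix x
  assume x: "x \<in> X - nest_up X \<L> k"
  show "x \<in> L"
  proof (rule ccontr)
    assume "x \<notin> L"
    with assms(1) have "\<forall>a\<in>L. nest_le \<L> a x" by (simp add: nest_le_if_notin_member)
    with assms(2) x have "nest_le \<L> k x" unfolding nest_sup_def by blast
    with x show False unfolding nest_up_def by blast
  qed
qed

lemma subset_compl_nest_up_sup:
  assumes "nest X \<L>" "L \<subseteq> X" "nest_sup X \<L> L k" "k \<notin> L"
  shows "L \<subseteq> X - nest_up X \<L> k"
proof
  fix x
  assume x: "x \<in> L"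
  have "x \<notin> nest_up X \<L> k"
  proof
    assume "x \<in> nest_up X \<L> k"
    then have "nest_le \<L> k x" unfolding nest_up_def by blast
    moreover have "nest_le \<L> x k" using assms(3) x unfolding nest_sup_def by blast
    ultimately have "k = x" by (rule nest_le_antisym[OF assms(1)])
    with x assms(4) show False by simp
  qed
  with x assms(2) show "x \<in> X - nest_up X \<L> k" by blast
qed

theorem lemma3p1:
  fixes X :: "'a set" and \<L> :: "'a set set"
  assumes "nest X \<L>"
  shows "((\<forall>M\<in>\<L>. \<exists>s. nest_sup X \<L> M s) \<longrightarrow>
           (\<forall>L\<in>\<L>. \<forall>k. nest_sup X \<L> L k \<longrightarrow> X - nest_up X \<L> k \<subseteq> L))
       \<and> ((\<forall>M\<in>\<L>. \<exists>s. nest_sup X \<L> M s \<and> s \<in> X - M) \<longrightarrow>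
           (\<forall>L\<in>\<L>. \<forall>k. nest_sup X \<L> L k \<longrightarrow> L \<subseteq> X - nest_up X \<L> k))"
proof (intro conjI impI ballI allI)
  fix L k
  assume "L \<in> \<L>" "nest_sup X \<L> L k"
  then show "X - nest_up X \<L> k \<subseteq> L" by (rule compl_nest_up_sup_subset)
next
  fix L k
  assume sups: "\<forall>M\<in>\<L>. \<exists>s. nest_sup X \<L> M s \<and> s \<in> X - M"
    and L: "L \<in> \<L>" and k: "nest_sup X \<L> L k"
  obtain s where s: "nest_sup X \<L> L s" "s \<notin> L" using sups L by blast
  from k s(1) have "k = s" by (rule nest_sup_unique[OF assms])
  with s(2) have "k \<notin> L" by simp
  moreover have "L \<subseteq> X" using assms L unfolding nest_def by blast
  ultimately show "L \<subseteq> X - nest_up X \<L> k"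
    using subset_compl_nest_up_sup[OF assms _ k] by simp
qed

end
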